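(* A minimal prime graph complement has no vertex of degree $1$.
   Context: All graphs are finite and simple. A graph $G$ is a minimal prime graph complement if $G$ has at least $2$ vertices and: (1) the complement $\overline{G}$ is connected; (2) $G$ is triangle-free; (3) $G$ is $3$-colorable (has a proper vertex coloring with $3$ colors); (4) $G$ is edge-maximal with respect to (2) and (3), i.e. for any two distinct nonadjacent vertices $u,v$ of $G$, the graph obtained by adding the edge $uv$ to $G$ either contains a triangle or is not $3$-colorable. *)

theory Defs
  imports Main
begin

definition simple_graph :: "'a set \<Rightarrow> ('a \<Rightarrow> 'a \<Rightarrow> bool) \<Rightarrow> bool" where
  "simple_graph V E \<longleftrightarrow> finite V \<and> (\<forall>u v. E u v \<longrightarrow> u \<in> V \<and> v \<in> V)
     \<and> (\<forall>u v. E u v \<longrightarrow> E v u) \<and> (\<forall>v. \<not> E v v)"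

definition complement :: "'a set \<Rightarrow> ('a \<Rightarrow> 'a \<Rightarrow> bool) \<Rightarrow> 'a \<Rightarrow> 'a \<Rightarrow> bool" where
  "complement V E u v \<longleftrightarrow> u \<in> V \<and> v \<in> V \<and> u \<noteq> v \<and> \<not> E u v"

definition connected_graph :: "'a set \<Rightarrow> ('a \<Rightarrow> 'a \<Rightarrow> bool) \<Rightarrow> bool" where
  "connected_graph V E \<longleftrightarrow> (\<forall>u\<in>V. \<forall>v\<in>V. (\<lambda>x y. E x y)\<^sup>*\<^sup>* u v)"

definition triangle_free :: "'a set \<Rightarrow> ('a \<Rightarrow> 'a \<Rightarrow> bool) \<Rightarrow> bool" where
  "triangle_free V E \<longleftrightarrow> \<not> (\<exists>a\<in>V. \<exists>b\<in>V. \<exists>c\<in>V. E a b \<and> E b c \<and> E a c)"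

definition three_colorable :: "'a set \<Rightarrow> ('a \<Rightarrow> 'a \<Rightarrow> bool) \<Rightarrow> bool" where
  "three_colorable V E \<longleftrightarrow> (\<exists>c :: 'a \<Rightarrow> nat. (\<forall>v\<in>V. c v < 3)
       \<and> (\<forall>u\<in>V. \<forall>v\<in>V. E u v \<longrightarrow> c u \<noteq> c v))"

definition add_edge :: "('a \<Rightarrow> 'a \<Rightarrow> bool) \<Rightarrow> 'a \<Rightarrow> 'a \<Rightarrow> 'a \<Rightarrow> 'a \<Rightarrow> bool" where
  "add_edge E u v x y \<longleftrightarrow> E x y \<or> (x = u \<and> y = v) \<or> (x = v \<and> y = u)"

definition minimal_prime_graph_complement :: "'a set \<Rightarrow> ('a \<Rightarrow> 'a \<Rightarrow> bool) \<Rightarrow> bool" where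
  "minimal_prime_graph_complement V E \<longleftrightarrow>
     simple_graph V E \<and> card V \<ge> 2 \<and>
     connected_graph V (complement V E) \<and>
     triangle_free V E \<and> three_colorable V E \<and>
     (\<forall>u\<in>V. \<forall>v\<in>V. u \<noteq> v \<and> \<not> E u v \<longrightarrow>
        \<not> triangle_free V (add_edge E u v) \<or> \<not> three_colorable V (add_edge E u v))"

definition degree :: "'a set \<Rightarrow> ('a \<Rightarrow> 'a \<Rightarrow> bool) \<Rightarrow> 'a \<Rightarrow> nat" where
  "degree V E v = card {u \<in> V. E v u}"

end

theory Submission
  imports Defs
begin

text \<open>Let \<open>v\<close> be a vertex of degree 1 with neighbour \<open>u\<close>. For any other vertex \<open>w\<close> not
  adjacent to \<open>u\<close>, the edge \<open>vw\<close> could be added: it creates no triangle, as \<open>u\<close> is the only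
  possible common neighbour of \<open>v\<close> and \<open>w\<close>, and \<open>v\<close> can be recoloured with a colour
  avoiding those of \<open>u\<close> and \<open>w\<close>. By maximality, \<open>u\<close> is therefore adjacent to all other
  vertices, i.e. isolated in the complement, which then cannot be connected.\<close>

lemma degree_eq_1_unique_neighbour:
  assumes "simple_graph V E" and "degree V E v = 1"
  obtains u where "E v u" and "\<And>x. E v x \<Longrightarrow> x = u"
proof -
  obtain u where u: "{x \<in> V. E v x} = {u}"
    using \<open>degree V E v = 1\<close> unfolding degree_def by (rule card_1_singletonE)
  have "\<And>x. E v x \<Longrightarrow> x \<in> V"
    using \<open>simple_graph V E\<close> unfolding simple_graph_def by blast
  with u show thesis
    by (intro that) auto
qed

lemma triangle_free_add_edge:
  assumes "simple_graph V E" and "triangle_free V E" and "v \<noteq> w"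
    and no_common_neighbour: "\<And>x. E v x \<Longrightarrow> E w x \<Longrightarrow> False"
  shows "triangle_free V (add_edge E v w)"
  unfolding triangle_free_def
proof (intro notI, elim bexE conjE)
  fix a b c
  assume "a \<in> V" "b \<in> V" "c \<in> V" and edges:
    "add_edge E v w a b" "add_edge E v w b c" "add_edge E v w a c"
  have sym: "\<And>x y. E x y \<Longrightarrow> E y x" and irrefl: "\<And>x. \<not> E x x"
    using \<open>simple_graph V E\<close> unfolding simple_graph_def by auto
  show False
  proof (cases "E a b \<and> E b c \<and> E a c")
    case True
    with \<open>triangle_free V E\<close> \<open>a \<in> V\<close> \<open>b \<in> V\<close> \<open>c \<in> V\<close> show False
      unfolding triangle_free_def by blast
  next
    case False
    \<comment> \<open>one side of the triangle is \<open>vw\<close>, so the opposite corner is a common neighbour\<close>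
    then show False
      using edges no_common_neighbour sym irrefl \<open>v \<noteq> w\<close> unfolding add_edge_def by blast
  qed
qed

lemma three_colorable_add_edge_at_leaf:
  assumes "three_colorable V E" and "v \<noteq> w"
    and leaf: "\<And>x. E v x \<Longrightarrow> x = u" and sym: "\<And>x y. E x y \<Longrightarrow> E y x"
  shows "three_colorable V (add_edge E v w)"
proof -
  obtain c :: "'a \<Rightarrow> nat" where c_range: "\<forall>x\<in>V. c x < 3"
    and c_proper: "\<forall>x\<in>V. \<forall>y\<in>V. E x y \<longrightarrow> c x \<noteq> c y"
    using \<open>three_colorable V E\<close> unfolding three_colorable_def by blast
  have "\<exists>k :: nat. k < 3 \<and> k \<noteq> c u \<and> k \<noteq> c w"
    by presburger
  then obtain k :: nat where "k < 3" "k \<noteq> c u" "k \<noteq> c w"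
    by blast
  have leaf': "\<And>x. E x v \<Longrightarrow> x = u"
    using leaf sym by blast
  let ?c' = "c(v := k)"
  have "\<forall>x\<in>V. ?c' x < 3"
    using c_range \<open>k < 3\<close> by simp
  moreover have "\<forall>x\<in>V. \<forall>y\<in>V. add_edge E v w x y \<longrightarrow> ?c' x \<noteq> ?c' y"
    using c_proper \<open>k \<noteq> c u\<close> \<open>k \<noteq> c w\<close> \<open>v \<noteq> w\<close> leaf leaf'
    unfolding add_edge_def by auto
  ultimately show ?thesis
    unfolding three_colorable_def by blast
qed

lemma minimal_prime_graph_complement_leaf_neighbour_dominates:
  assumes G: "minimal_prime_graph_complement V E"
    and "v \<in> V" and "E v u" and leaf: "\<And>x. E v x \<Longrightarrow> x = u"
    and "w \<in> V" and "w \<noteq> u"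
  shows "E u w"
proof (rule ccontr)
  assume "\<not> E u w"
  have simple: "simple_graph V E" and "triangle_free V E" and "three_colorable V E"
    and maximal: "\<forall>x\<in>V. \<forall>y\<in>V. x \<noteq> y \<and> \<not> E x y \<longrightarrow>
        \<not> triangle_free V (add_edge E x y) \<or> \<not> three_colorable V (add_edge E x y)"
    using G unfolding minimal_prime_graph_complement_def by blast+
  have sym: "\<And>x y. E x y \<Longrightarrow> E y x"
    using simple unfolding simple_graph_def by blast
  have "v \<noteq> w"
    using \<open>E v u\<close> \<open>\<not> E u w\<close> sym by blast
  have "\<not> E v w"
    using leaf \<open>w \<noteq> u\<close> by blast
  have "triangle_free V (add_edge E v w)"
    using simple \<open>triangle_free V E\<close> \<open>v \<noteq> w\<close>
  proof (rule triangle_free_add_edge)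
    show "\<And>x. E v x \<Longrightarrow> E w x \<Longrightarrow> False"
      using leaf sym \<open>\<not> E u w\<close> by blast
  qed
  moreover have "three_colorable V (add_edge E v w)"
    using \<open>three_colorable V E\<close> \<open>v \<noteq> w\<close> leaf sym by (rule three_colorable_add_edge_at_leaf)
  ultimately show False
    using maximal \<open>v \<in> V\<close> \<open>w \<in> V\<close> \<open>v \<noteq> w\<close> \<open>\<not> E v w\<close> by blast
qed

lemma connected_complement_dominating_vertex:
  assumes "connected_graph V (complement V E)" and "u \<in> V"
    and dominating: "\<And>w. w \<in> V \<Longrightarrow> w \<noteq> u \<Longrightarrow> E u w"
  shows "V = {u}"
proof -
  have "x = u" if "x \<in> V" for x
  proof -
    have "(complement V E)\<^sup>*\<^sup>* u x"
      using assms(1) \<open>u \<in> V\<close> \<open>x \<in> V\<close> unfolding connected_graph_def by blast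
    then show "x = u"
      by (cases rule: converse_rtranclpE) (auto simp: complement_def dominating)
  qed
  with \<open>u \<in> V\<close> show ?thesis
    by blast
qed

theorem lemma3:
  assumes "minimal_prime_graph_complement V E"
  shows "\<forall>v\<in>V. degree V E v \<noteq> 1"
proof (intro ballI notI)
  fix v
  assume "v \<in> V" and "degree V E v = 1"
  have "simple_graph V E" and "card V \<ge> 2" and "connected_graph V (complement V E)"
    using assms unfolding minimal_prime_graph_complement_def by blast+
  obtain u where "E v u" and leaf: "\<And>x. E v x \<Longrightarrow> x = u"
    using \<open>simple_graph V E\<close> \<open>degree V E v = 1\<close> by (rule degree_eq_1_unique_neighbour) blast
  have "u \<in> V"
    using \<open>simple_graph V E\<close> \<open>E v u\<close> unfolding simple_graph_def by blast
  have "\<And>w. w \<in> V \<Longrightarrow> w \<noteq> u \<Longrightarrow> E u w"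
    using assms \<open>v \<in> V\<close> \<open>E v u\<close> leaf
    by (rule minimal_prime_graph_complement_leaf_neighbour_dominates)
  with \<open>connected_graph V (complement V E)\<close> \<open>u \<in> V\<close> have "V = {u}"
    by (rule connected_complement_dominating_vertex)
  with \<open>card V \<ge> 2\<close> show False
    by simp
qed

end
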